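(* Let $(X,\sigma_X,P)$ be a probability space, $(Y,\cdot)$ a set with a function $\sigma\colon Y\times Y\to\mathbb R$, $\mathcal F$ a set of functions $X\to Y$ and $Q$ a probability measure on $\mathcal F$ (all functions involved assumed measurable as needed). Let $k\ge1$. Suppose $\vec x^*=\{x^*_1,\dots,x^*_k\}\subseteq X$ is a quantization minimizing the reconstruction error $E_\rho$ over all $k$-point quantizations of $X$, and let $\vec X^{\rho}$ be the partition of $X$ induced by $\rho$ and $\vec x^*$. Then for every $k$-point quantization $\vec x$ of $X$ and every partition $\vec X$ of $X$ faithful to $\vec x$, $$E_{\mathcal F}(\vec x^*,\vec X^{\rho})\le E_{\mathcal F}(\vec x,\vec X),$$ i.e. the reconstruction error $E_{\mathcal F}$ of $\mathcal F$ is minimal at the pair $(\vec x^*,\vec X^\rho)$.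
   Context: The canonical distortion measure is $\rho(x,y)=\int_{\mathcal F}\sigma(f(x),f(y))\,dQ(f)$. A quantization is a set $\vec x=\{x_1,\dots,x_k\}\subseteq X$; $q_\rho(x)$ is a point $x_i$ of $\vec x$ minimizing $\rho(x,x_i)$; $E_\rho(\vec x)=\int_X\rho(x,q_\rho(x))\,dP(x)$. A partition $\vec X=\{X_1,\dots,X_k\}$ of $X$ is faithful to $\vec x$ if $x_i\in X_i$ for each $i$. Given $(\vec x,\vec X)$, for $f\in\mathcal F$ the approximation $\hat f$ is $\hat f(x)=f(x_i)$ for $x\in X_i$; $d_P(f,\hat f)=\int_X\sigma(f(x),\hat f(x))\,dP(x)$ and $E_{\mathcal F}(\vec x,\vec X)=\int_{\mathcal F}d_P(f,\hat f)\,dQ(f)$. The partition induced by $\rho$ and $\vec x$ is $\vec X^\rho=\{X^\rho_1,\dots,X^\rho_k\}$ with $X^\rho_i=\{x:\rho(x,x_i)\le\rho(x,x_j)\ \forall j\ne i\}$, ties broken arbitrarily so as to obtain a partition. *)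

theory Defs
  imports "HOL-Probability.Probability"
begin

text \<open>Canonical distortion measure rho(x,y) = integral over F of sigma(f x, f y) dQ(f).
  The function class F is the space of the measure Q.\<close>
definition rho :: "('x \<Rightarrow> 'y) measure \<Rightarrow> ('y \<Rightarrow> 'y \<Rightarrow> real) \<Rightarrow> 'x \<Rightarrow> 'x \<Rightarrow> real" where
  "rho Q \<sigma> x y = (\<integral>f. \<sigma> (f x) (f y) \<partial>Q)"

definition quantization :: "'x measure \<Rightarrow> nat \<Rightarrow> (nat \<Rightarrow> 'x) \<Rightarrow> bool" where
  "quantization P k xs \<longleftrightarrow> xs ` {..<k} \<subseteq> space P \<and> inj_on xs {..<k}"

definition q_rho :: "('x \<Rightarrow> 'y) measure \<Rightarrow> ('y \<Rightarrow> 'y \<Rightarrow> real) \<Rightarrow> nat \<Rightarrow> (nat \<Rightarrow> 'x) \<Rightarrow> 'x \<Rightarrow> 'x" where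
  "q_rho Q \<sigma> k xs x = xs (ARG_MIN (\<lambda>i. rho Q \<sigma> x (xs i)) i. i < k)"

definition E_rho :: "'x measure \<Rightarrow> ('x \<Rightarrow> 'y) measure \<Rightarrow> ('y \<Rightarrow> 'y \<Rightarrow> real) \<Rightarrow> nat \<Rightarrow> (nat \<Rightarrow> 'x) \<Rightarrow> real" where
  "E_rho P Q \<sigma> k xs = (\<integral>x. rho Q \<sigma> x (q_rho Q \<sigma> k xs x) \<partial>P)"

text \<open>A (measurable) partition X_0..X_(k-1) of X, encoded by the index map c:
  X_i = {x \<in> X. c x = i}.\<close>
definition partition_of :: "'x measure \<Rightarrow> nat \<Rightarrow> ('x \<Rightarrow> nat) \<Rightarrow> bool" where
  "partition_of P k c \<longleftrightarrow> c \<in> space P \<rightarrow> {..<k} \<and> (\<forall>i<k. {x \<in> space P. c x = i} \<in> sets P)"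

definition faithful :: "nat \<Rightarrow> (nat \<Rightarrow> 'x) \<Rightarrow> ('x \<Rightarrow> nat) \<Rightarrow> bool" where
  "faithful k xs c \<longleftrightarrow> (\<forall>i<k. c (xs i) = i)"

definition induced_partition :: "'x measure \<Rightarrow> ('x \<Rightarrow> 'y) measure \<Rightarrow> ('y \<Rightarrow> 'y \<Rightarrow> real) \<Rightarrow> nat \<Rightarrow> (nat \<Rightarrow> 'x) \<Rightarrow> ('x \<Rightarrow> nat) \<Rightarrow> bool" where
  "induced_partition P Q \<sigma> k xs c \<longleftrightarrow> partition_of P k c \<and>
     (\<forall>x\<in>space P. \<forall>j<k. rho Q \<sigma> x (xs (c x)) \<le> rho Q \<sigma> x (xs j))"

definition approx :: "('x \<Rightarrow> 'y) \<Rightarrow> (nat \<Rightarrow> 'x) \<Rightarrow> ('x \<Rightarrow> nat) \<Rightarrow> 'x \<Rightarrow> 'y" where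
  "approx f xs c x = f (xs (c x))"

definition d_P :: "'x measure \<Rightarrow> ('y \<Rightarrow> 'y \<Rightarrow> real) \<Rightarrow> ('x \<Rightarrow> 'y) \<Rightarrow> ('x \<Rightarrow> 'y) \<Rightarrow> real" where
  "d_P P \<sigma> f g = (\<integral>x. \<sigma> (f x) (g x) \<partial>P)"

definition E_F :: "'x measure \<Rightarrow> ('x \<Rightarrow> 'y) measure \<Rightarrow> ('y \<Rightarrow> 'y \<Rightarrow> real) \<Rightarrow> (nat \<Rightarrow> 'x) \<Rightarrow> ('x \<Rightarrow> nat) \<Rightarrow> real" where
  "E_F P Q \<sigma> xs c = (\<integral>f. d_P P \<sigma> f (approx f xs c) \<partial>Q)"

end

theory Submission
  imports Defs
begin

text \<open>By Fubini, \<open>E_F(xs, c) = \<integral> \<rho>(t, xs (c t)) dP(t)\<close>. Since \<open>q\<^sub>\<rho>(t)\<close> is a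
  \<open>\<rho>\<close>-closest point of \<open>xs\<close>, this is at least \<open>E\<^sub>\<rho>(xs)\<close>, with equality when \<open>c\<close> is the
  partition induced by \<open>\<rho>\<close>. Hence
  \<open>E_F(xs\<^sup>*, c\<^sup>\<rho>) = E\<^sub>\<rho>(xs\<^sup>*) \<le> E\<^sub>\<rho>(xs) \<le> E_F(xs, c)\<close>.\<close>

lemma arg_min_lessThan:
  fixes g :: "nat \<Rightarrow> 'b::linorder"
  assumes "j < k"
  shows "(ARG_MIN g i. i < k) < k" and "g (ARG_MIN g i. i < k) \<le> g j"
proof -
  have ne: "finite {..<k}" "{..<k} \<noteq> {}" using assms by auto
  have eq: "arg_min_on g {..<k} = (ARG_MIN g i. i < k)"
    by (simp add: arg_min_on_def)
  show "(ARG_MIN g i. i < k) < k" using arg_min_if_finite(1)[OF ne, of g] by (simp add: eq)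
  show "g (ARG_MIN g i. i < k) \<le> g j" using arg_min_least[OF ne, of j g] assms by (simp add: eq)
qed

lemma q_rho_in_image:
  assumes "0 < k"
  shows "q_rho Q \<sigma> k xs x \<in> xs ` {..<k}"
  using arg_min_lessThan(1)[OF assms, of "\<lambda>i. rho Q \<sigma> x (xs i)"] unfolding q_rho_def by blast

lemma rho_q_rho_le:
  assumes "j < k"
  shows "rho Q \<sigma> x (q_rho Q \<sigma> k xs x) \<le> rho Q \<sigma> x (xs j)"
  using arg_min_lessThan(2)[OF assms] by (simp add: q_rho_def)

lemma rho_q_rho_eq_Min:
  assumes "0 < k"
  shows "rho Q \<sigma> x (q_rho Q \<sigma> k xs x) = Min ((\<lambda>i. rho Q \<sigma> x (xs i)) ` {..<k})"
  using q_rho_in_image[OF assms, of Q \<sigma> xs x] rho_q_rho_le[of _ k Q \<sigma> x xs]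
  by (intro Min_eqI[symmetric]) auto

lemma integrable_Min:
  fixes f :: "'i \<Rightarrow> 'a \<Rightarrow> real"
  assumes "finite I" "I \<noteq> {}" "\<And>i. i \<in> I \<Longrightarrow> integrable M (f i)"
  shows "integrable M (\<lambda>x. Min ((\<lambda>i. f i x) ` I))"
  using assms by (induction I rule: finite_ne_induct) auto

lemma integrable_partition_of:
  fixes g :: "nat \<Rightarrow> 'a \<Rightarrow> 'b::{banach, second_countable_topology}"
  assumes c: "partition_of M k c" and g: "\<And>i. i < k \<Longrightarrow> integrable M (g i)"
  shows "integrable M (\<lambda>x. g (c x) x)"
proof -
  let ?piece = "\<lambda>i x. indicator {x \<in> space M. c x = i} x *\<^sub>R g i x"
  have pieces: "integrable M (\<lambda>x. \<Sum>i<k. ?piece i x)"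
    using c g unfolding partition_of_def
    by (intro Bochner_Integration.integrable_sum integrable_mult_indicator) auto
  have pointwise: "(\<Sum>i<k. ?piece i x) = g (c x) x" if "x \<in> space M" for x
  proof -
    have "(\<Sum>i<k. ?piece i x) = (\<Sum>i<k. if i = c x then g i x else 0)"
      using that by (intro sum.cong) (auto simp: indicator_def)
    also have "\<dots> = g (c x) x"
      using c that by (auto simp: partition_of_def)
    finally show ?thesis .
  qed
  show ?thesis by (rule iffD1[OF Bochner_Integration.integrable_cong[OF refl pointwise] pieces])
qed

lemma partition_of_pair_measure_snd:
  assumes "partition_of P k c"
  shows "partition_of (Q \<Otimes>\<^sub>M P) k (\<lambda>z. c (snd z))"
proof -
  have "{z \<in> space (Q \<Otimes>\<^sub>M P). c (snd z) = i} = space Q \<times> {x \<in> space P. c x = i}" for i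
    by (auto simp: space_pair_measure)
  then show ?thesis
    using assms by (auto simp: partition_of_def space_pair_measure intro!: pair_measureI)
qed

lemma integrable_sigma_partition:
  fixes \<sigma> :: "'y \<Rightarrow> 'y \<Rightarrow> real"
  assumes int_prod: "\<And>y. y \<in> space P \<Longrightarrow> integrable (Q \<Otimes>\<^sub>M P) (\<lambda>(f, x). \<sigma> (f x) (f y))"
    and xs: "xs ` {..<k} \<subseteq> space P" and c: "partition_of P k c"
  shows "integrable (Q \<Otimes>\<^sub>M P) (\<lambda>(f, x). \<sigma> (f x) (f (xs (c x))))"
proof -
  define g where "g i = (\<lambda>(f, x). \<sigma> (f x) (f (xs i)))" for i
  have "integrable (Q \<Otimes>\<^sub>M P) (\<lambda>z. g (c (snd z)) z)"
  proof (rule integrable_partition_of[OF partition_of_pair_measure_snd[OF c]])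
    show "integrable (Q \<Otimes>\<^sub>M P) (g i)" if "i < k" for i
      using xs that unfolding g_def by (intro int_prod) auto
  qed
  then show ?thesis by (simp add: g_def case_prod_beta')
qed

lemma integrable_rho:
  assumes "sigma_finite_measure P" "sigma_finite_measure Q"
    and "integrable (Q \<Otimes>\<^sub>M P) (\<lambda>(f, x). \<sigma> (f x) (f (g x)))"
  shows "integrable P (\<lambda>x. rho Q \<sigma> x (g x))"
proof -
  interpret pair_sigma_finite Q P using assms(1,2) by (simp add: pair_sigma_finite_def)
  show ?thesis using integrable_snd[OF assms(3)] by (simp add: rho_def)
qed

lemma E_F_eq_integral_rho:
  assumes "sigma_finite_measure P" "sigma_finite_measure Q"
    and "integrable (Q \<Otimes>\<^sub>M P) (\<lambda>(f, x). \<sigma> (f x) (f (xs (c x))))"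
  shows "E_F P Q \<sigma> xs c = (\<integral>x. rho Q \<sigma> x (xs (c x)) \<partial>P)"
proof -
  interpret pair_sigma_finite Q P using assms(1,2) by (simp add: pair_sigma_finite_def)
  show ?thesis
    unfolding E_F_def d_P_def approx_def rho_def by (rule Fubini_integral[OF assms(3), symmetric])
qed

lemma integrable_rho_q_rho:
  assumes "sigma_finite_measure P" "sigma_finite_measure Q" "0 < k"
    and int_prod: "\<And>y. y \<in> space P \<Longrightarrow> integrable (Q \<Otimes>\<^sub>M P) (\<lambda>(f, x). \<sigma> (f x) (f y))"
    and xs: "xs ` {..<k} \<subseteq> space P"
  shows "integrable P (\<lambda>x. rho Q \<sigma> x (q_rho Q \<sigma> k xs x))"
proof -
  have "integrable P (\<lambda>x. rho Q \<sigma> x (xs i))" if "i < k" for i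
    using integrable_rho[OF assms(1,2) int_prod] xs that by auto
  then have "integrable P (\<lambda>x. Min ((\<lambda>i. rho Q \<sigma> x (xs i)) ` {..<k}))"
    using \<open>0 < k\<close> by (intro integrable_Min) auto
  then show ?thesis by (simp add: rho_q_rho_eq_Min[OF \<open>0 < k\<close>])
qed

lemma E_F_induced_partition:
  assumes "sigma_finite_measure P" "sigma_finite_measure Q"
    and int_prod: "\<And>y. y \<in> space P \<Longrightarrow> integrable (Q \<Otimes>\<^sub>M P) (\<lambda>(f, x). \<sigma> (f x) (f y))"
    and xs: "xs ` {..<k} \<subseteq> space P" and c: "induced_partition P Q \<sigma> k xs c"
  shows "E_F P Q \<sigma> xs c = E_rho P Q \<sigma> k xs"
proof -
  have part: "partition_of P k c"
    and closest: "\<And>x j. x \<in> space P \<Longrightarrow> j < k \<Longrightarrow> rho Q \<sigma> x (xs (c x)) \<le> rho Q \<sigma> x (xs j)"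
    using c by (auto simp: induced_partition_def)
  have "rho Q \<sigma> x (xs (c x)) = rho Q \<sigma> x (q_rho Q \<sigma> k xs x)" if x: "x \<in> space P" for x
  proof -
    have ck: "c x < k" using part x by (auto simp: partition_of_def)
    then obtain i where "i < k" and q: "q_rho Q \<sigma> k xs x = xs i"
      using q_rho_in_image[where k = k and Q = Q and \<sigma> = \<sigma> and xs = xs and x = x] by auto
    have "rho Q \<sigma> x (xs (c x)) \<le> rho Q \<sigma> x (q_rho Q \<sigma> k xs x)"
      using closest[OF x \<open>i < k\<close>] by (simp only: q)
    moreover have "rho Q \<sigma> x (q_rho Q \<sigma> k xs x) \<le> rho Q \<sigma> x (xs (c x))"
      by (rule rho_q_rho_le[OF ck])
    ultimately show ?thesis by (rule order_antisym)
  qed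
  then have "(\<integral>x. rho Q \<sigma> x (xs (c x)) \<partial>P) = E_rho P Q \<sigma> k xs"
    unfolding E_rho_def by (rule Bochner_Integration.integral_cong[OF refl])
  then show ?thesis
    using E_F_eq_integral_rho[OF assms(1,2) integrable_sigma_partition[OF int_prod xs part]] by simp
qed

lemma E_rho_le_E_F:
  assumes "sigma_finite_measure P" "sigma_finite_measure Q" "0 < k"
    and int_prod: "\<And>y. y \<in> space P \<Longrightarrow> integrable (Q \<Otimes>\<^sub>M P) (\<lambda>(f, x). \<sigma> (f x) (f y))"
    and xs: "xs ` {..<k} \<subseteq> space P" and c: "partition_of P k c"
  shows "E_rho P Q \<sigma> k xs \<le> E_F P Q \<sigma> xs c"
proof -
  have int_c: "integrable (Q \<Otimes>\<^sub>M P) (\<lambda>(f, x). \<sigma> (f x) (f (xs (c x))))"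
    by (rule integrable_sigma_partition[OF int_prod xs c])
  have "E_rho P Q \<sigma> k xs \<le> (\<integral>x. rho Q \<sigma> x (xs (c x)) \<partial>P)"
    unfolding E_rho_def
  proof (rule integral_mono)
    show "integrable P (\<lambda>x. rho Q \<sigma> x (q_rho Q \<sigma> k xs x))"
      by (rule integrable_rho_q_rho[OF assms(1-3) int_prod xs])
    show "integrable P (\<lambda>x. rho Q \<sigma> x (xs (c x)))"
      by (rule integrable_rho[OF assms(1,2) int_c])
    show "rho Q \<sigma> x (q_rho Q \<sigma> k xs x) \<le> rho Q \<sigma> x (xs (c x))" if "x \<in> space P" for x
      using c that by (intro rho_q_rho_le) (auto simp: partition_of_def)
  qed
  also have "\<dots> = E_F P Q \<sigma> xs c"
    by (rule E_F_eq_integral_rho[OF assms(1,2) int_c, symmetric])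
  finally show ?thesis .
qed

theorem theorem5p3:
  fixes P :: "'x measure" and Q :: "('x \<Rightarrow> 'y) measure" and \<sigma> :: "'y \<Rightarrow> 'y \<Rightarrow> real"
    and k :: nat and xstar :: "nat \<Rightarrow> 'x" and cstar :: "'x \<Rightarrow> nat"
  assumes "prob_space P" and "prob_space Q" and "k \<ge> 1"
    and int_prod: "\<And>y. y \<in> space P \<Longrightarrow> integrable (Q \<Otimes>\<^sub>M P) (\<lambda>(f, x). \<sigma> (f x) (f y))"
    and int_Q: "\<And>x y. x \<in> space P \<Longrightarrow> y \<in> space P \<Longrightarrow> integrable Q (\<lambda>f. \<sigma> (f x) (f y))"
    and "quantization P k xstar"
    and opt: "\<And>xs. quantization P k xs \<Longrightarrow> E_rho P Q \<sigma> k xstar \<le> E_rho P Q \<sigma> k xs"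
    and "induced_partition P Q \<sigma> k xstar cstar"
  shows "\<forall>xs c. quantization P k xs \<and> partition_of P k c \<and> faithful k xs c
           \<longrightarrow> E_F P Q \<sigma> xstar cstar \<le> E_F P Q \<sigma> xs c"
proof (intro allI impI, elim conjE)
  fix xs c assume xs: "quantization P k xs" and c: "partition_of P k c"
  have P: "sigma_finite_measure P" and Q: "sigma_finite_measure Q"
    using \<open>prob_space P\<close> \<open>prob_space Q\<close> by (simp_all add: prob_space_imp_sigma_finite)
  have "E_F P Q \<sigma> xstar cstar = E_rho P Q \<sigma> k xstar"
    using E_F_induced_partition[OF P Q int_prod] \<open>quantization P k xstar\<close>
      \<open>induced_partition P Q \<sigma> k xstar cstar\<close> by (simp add: quantization_def)
  also have "\<dots> \<le> E_rho P Q \<sigma> k xs" by (rule opt[OF xs])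
  also have "\<dots> \<le> E_F P Q \<sigma> xs c"
    using E_rho_le_E_F[OF P Q _ int_prod _ c] \<open>k \<ge> 1\<close> xs by (simp add: quantization_def)
  finally show "E_F P Q \<sigma> xstar cstar \<le> E_F P Q \<sigma> xs c" .
qed

end
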